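(* Let $G$ be a group with finite generating set $S$ and let $\Gamma$ be a tileset graph for $(G,S)$. The following are equivalent: (1) $\Gamma$ admits a bi-infinite snake; (2) $\Gamma$ admits a one-way infinite snake; (3) $\Gamma$ admits a snake of every length.
   Context: A tileset graph for $(G,S)$ is a finite multigraph $\Gamma=(A,B)$ whose edges are triples $(a,a',s)$ with $a,a'\in A$, $s\in S\cup S^{-1}$, such that $(a,a',s)\in B$ implies $(a',a,s^{-1})\in B$. For $I$ equal to $\mathbb{Z}$, $\mathbb{N}$ or a finite integer interval $\{n,\dots,m\}$, a $\Gamma$-snake on $I$ is a pair $(\omega,\zeta)$ with $\omega:I\to G$ injective and $\zeta:I\to A$ such that whenever $i,i+1\in I$: $d\omega_i:=\omega(i)^{-1}\omega(i+1)\in S\cup S^{-1}$ and $(\zeta(i),\zeta(i+1),d\omega_i)\in B$. It is bi-infinite if $I=\mathbb{Z}$, one-way infinite if $I=\mathbb{N}$; "a snake of every length" means that for every $n$ there is a $\Gamma$-snake on a finite interval with at least $n$ elements. *)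

theory Defs
  imports "HOL-Algebra.Algebra"
begin

definition sym_gens :: "('g, 'b) monoid_scheme \<Rightarrow> 'g set \<Rightarrow> 'g set" where
  "sym_gens G S = S \<union> (\<lambda>s. inv\<^bsub>G\<^esub> s) ` S"

definition tileset_graph ::
  "('g, 'b) monoid_scheme \<Rightarrow> 'g set \<Rightarrow> 'a set \<Rightarrow> ('a \<times> 'a \<times> 'g) set \<Rightarrow> bool" where
  "tileset_graph G S A B \<longleftrightarrow> finite A \<and> finite B \<and>
     (\<forall>(a, a', s) \<in> B. a \<in> A \<and> a' \<in> A \<and> s \<in> sym_gens G S) \<and>
     (\<forall>(a, a', s) \<in> B. (a', a, inv\<^bsub>G\<^esub> s) \<in> B)"

definition snake_on ::
  "('g, 'b) monoid_scheme \<Rightarrow> 'g set \<Rightarrow> 'a set \<Rightarrow> ('a \<times> 'a \<times> 'g) set \<Rightarrow>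
   int set \<Rightarrow> (int \<Rightarrow> 'g) \<Rightarrow> (int \<Rightarrow> 'a) \<Rightarrow> bool" where
  "snake_on G S A B I \<omega> \<zeta> \<longleftrightarrow>
     \<omega> ` I \<subseteq> carrier G \<and> inj_on \<omega> I \<and> \<zeta> ` I \<subseteq> A \<and>
     (\<forall>i. i \<in> I \<and> i + 1 \<in> I \<longrightarrow>
        inv\<^bsub>G\<^esub> (\<omega> i) \<otimes>\<^bsub>G\<^esub> \<omega> (i + 1) \<in> sym_gens G S \<and>
        (\<zeta> i, \<zeta> (i + 1), inv\<^bsub>G\<^esub> (\<omega> i) \<otimes>\<^bsub>G\<^esub> \<omega> (i + 1)) \<in> B)"

definition has_biinfinite_snake where
  "has_biinfinite_snake G S A B \<longleftrightarrow> (\<exists>\<omega> \<zeta>. snake_on G S A B UNIV \<omega> \<zeta>)"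

(* \<nat> is identified with the nonnegative integers {0..} *)
definition has_oneway_snake where
  "has_oneway_snake G S A B \<longleftrightarrow> (\<exists>\<omega> \<zeta>. snake_on G S A B {0..} \<omega> \<zeta>)"

definition has_snakes_of_every_length where
  "has_snakes_of_every_length G S A B \<longleftrightarrow>
     (\<forall>k::nat. \<exists>n m \<omega> \<zeta>. card {n..m} \<ge> k \<and> snake_on G S A B {n..m} \<omega> \<zeta>)"

end

(*
  A bi-infinite snake restricts to a one-way infinite one, which restricts to snakes of
  every length. Conversely, a snake of length 2N + 1, re-indexed around its midpoint and
  left-translated so that the midpoint sits at the identity, is a rooted snake on the window
  [-N, N]. Position i of a rooted snake lies in the word-metric ball of radius |i|, so each
  window carries only finitely many rooted snakes, and Koenig's lemma yields a single rooted
  snake on all windows at once: a bi-infinite snake.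
*)
theory Submission
  imports Defs "HOL-Library.Infinite_Set"
begin

lemma frequently_pigeonhole:
  assumes "finite (r ` C)" and "\<exists>\<^sub>F N in F. \<exists>x\<in>C. \<Phi> N x"
  shows "\<exists>y. \<exists>\<^sub>F N in F. \<exists>x\<in>C. \<Phi> N x \<and> r x = y"
proof -
  have "\<exists>\<^sub>F N in F. \<exists>y\<in>r ` C. \<exists>x\<in>C. \<Phi> N x \<and> r x = y"
    using assms(2) by (rule frequently_elim1) blast
  then show ?thesis
    using assms(1) by (simp only: frequently_bex_finite_distrib) blast
qed

lemma restrict_chain_limit:
  assumes D_mono: "mono D" and D_covers: "\<And>i. \<exists>k. i \<in> D k"
    and supported: "\<And>k. restrict (g k) (D k) = g k"
    and coherent: "\<And>k. restrict (g (Suc k)) (D k) = g k"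
  shows "\<exists>f. \<forall>N. restrict f (D N) = g N"
proof -
  have chain: "restrict (g n) (D m) = g m" if "m \<le> n" for m n
    using that
  proof (induction n rule: dec_induct)
    case base
    show ?case by (rule supported)
  next
    case (step n)
    have "D m \<subseteq> D n" using D_mono step.hyps by (simp add: mono_def)
    then have "restrict (g (Suc n)) (D m) = restrict (restrict (g (Suc n)) (D n)) (D m)"
      by (simp add: Int_absorb1)
    then show ?case using coherent step.IH by simp
  qed
  define lim where "lim i = g (SOME k. i \<in> D k) i" for i
  have "restrict lim (D N) = g N" for N
  proof
    fix i
    define k where "k = (SOME k. i \<in> D k)"
    have "i \<in> D k" unfolding k_def using D_covers by (rule someI_ex)
    then have "lim i = g (max k N) i"
      using chain[of k "max k N"] unfolding lim_def k_def[symmetric]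
      by (metis max.cobounded1 restrict_apply')
    then show "restrict lim (D N) i = g N i"
      using chain[of N "max k N"] chain[of N N] by (metis max.cobounded2 restrict_apply restrict_apply')
  qed
  then show ?thesis by blast
qed

lemma koenig_compactness:
  fixes P :: "nat \<Rightarrow> ('i \<Rightarrow> 'x) \<Rightarrow> bool" and D :: "nat \<Rightarrow> 'i set"
  assumes D_mono: "mono D" and D_covers: "\<And>i. \<exists>k. i \<in> D k"
    and P_antimono: "\<And>N N' f. P N' f \<Longrightarrow> N \<le> N' \<Longrightarrow> P N f"
    and P_local: "\<And>N f f'. P N f \<Longrightarrow> restrict f' (D N) = restrict f (D N) \<Longrightarrow> P N f'"
    and finite_restrictions: "\<And>k. finite ((\<lambda>f. restrict f (D k)) ` {f. P k f})"
    and satisfiable: "\<And>N. \<exists>f. P N f"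
  shows "\<exists>f. \<forall>N. P N f"
proof -
  define extendable where
    "extendable k g \<longleftrightarrow> (\<exists>\<^sub>\<infinity>N. \<exists>f. P N f \<and> restrict f (D k) = g)" for k g
  have refine: "\<exists>g. \<exists>\<^sub>\<infinity>N. \<exists>f. P N f \<and> Q f \<and> restrict f (D k) = g"
    if "\<exists>\<^sub>\<infinity>N. \<exists>f. P N f \<and> Q f" for k Q
  proof -
    have "\<forall>\<^sub>\<infinity>N. (\<exists>f. P N f \<and> Q f) \<longrightarrow> (\<exists>f\<in>{f. P k f}. P N f \<and> Q f)"
      using MOST_ge_nat[of k] by eventually_elim (auto intro: P_antimono)
    then have "\<exists>\<^sub>\<infinity>N. \<exists>f\<in>{f. P k f}. P N f \<and> Q f"
      using that by (rule frequently_mp)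
    with finite_restrictions[of k] have "\<exists>g. \<exists>\<^sub>\<infinity>N. \<exists>f\<in>{f. P k f}. (P N f \<and> Q f) \<and> restrict f (D k) = g"
      by (rule frequently_pigeonhole)
    then show ?thesis by (auto elim!: frequently_elim1)
  qed
  have start: "\<exists>g. extendable 0 g"
    using refine[of "\<lambda>_. True" 0] satisfiable by (simp add: extendable_def)
  have step: "\<exists>g'. extendable (Suc k) g' \<and> restrict g' (D k) = g" if g_ext: "extendable k g" for k g
  proof -
    obtain g' where g': "\<exists>\<^sub>\<infinity>N. \<exists>f. P N f \<and> restrict f (D k) = g \<and> restrict f (D (Suc k)) = g'"
      using refine[of "\<lambda>f. restrict f (D k) = g" "Suc k"] g_ext by (auto simp: extendable_def)
    then obtain f where "restrict f (D k) = g" "restrict f (D (Suc k)) = g'"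
      by (auto elim: INFM_E)
    moreover have "D k \<subseteq> D (Suc k)" using D_mono by (simp add: mono_def)
    ultimately have "restrict g' (D k) = g" by (auto simp: Int_absorb1)
    moreover have "extendable (Suc k) g'"
      using g' unfolding extendable_def by (rule frequently_elim1) blast
    ultimately show ?thesis by blast
  qed
  obtain g where g_ext: "\<And>k. extendable k (g k)"
    and coherent: "\<And>k. restrict (g (Suc k)) (D k) = g k"
    using dependent_nat_choice[of extendable "\<lambda>k g g'. restrict g' (D k) = g", OF start step] by blast
  have witness: "\<exists>f. P N f \<and> restrict f (D N) = g N" for N
    using g_ext[of N] unfolding extendable_def INFM_nat_le by (blast intro: P_antimono)
  then have "restrict (g k) (D k) = g k" for k
    by (metis restrict_restrict Int_absorb)
  then obtain lim where "\<And>N. restrict lim (D N) = g N"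
    using restrict_chain_limit[OF D_mono D_covers _ coherent] by blast
  then show ?thesis using witness P_local by metis
qed

lemma snake_on_subset:
  "snake_on G S A B I \<omega> \<zeta> \<Longrightarrow> I' \<subseteq> I \<Longrightarrow> snake_on G S A B I' \<omega> \<zeta>"
  unfolding snake_on_def by (auto intro: inj_on_subset)

lemma snake_on_cong:
  assumes "\<And>i. i \<in> I \<Longrightarrow> \<omega> i = \<omega>' i" and "\<And>i. i \<in> I \<Longrightarrow> \<zeta> i = \<zeta>' i"
  shows "snake_on G S A B I \<omega> \<zeta> \<longleftrightarrow> snake_on G S A B I \<omega>' \<zeta>'"
  using assms inj_on_cong[of I \<omega> \<omega>'] unfolding snake_on_def by (auto simp: image_subset_iff)

lemma snake_on_iff_pairs:
  "snake_on G S A B I \<omega> \<zeta> \<longleftrightarrow> (\<forall>i\<in>I. \<forall>j\<in>I. snake_on G S A B {i, j} \<omega> \<zeta>)"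
proof
  assume pairs: "\<forall>i\<in>I. \<forall>j\<in>I. snake_on G S A B {i, j} \<omega> \<zeta>"
  have "\<omega> ` I \<subseteq> carrier G" "\<zeta> ` I \<subseteq> A"
    using pairs unfolding snake_on_def by auto
  moreover have "inj_on \<omega> I"
  proof (rule inj_onI)
    fix i j assume "i \<in> I" "j \<in> I" "\<omega> i = \<omega> j"
    with pairs have "snake_on G S A B {i, j} \<omega> \<zeta>" by blast
    then have "inj_on \<omega> {i, j}" unfolding snake_on_def by blast
    from this \<open>\<omega> i = \<omega> j\<close> show "i = j" by (rule inj_onD) simp_all
  qed
  moreover have "inv\<^bsub>G\<^esub> \<omega> i \<otimes>\<^bsub>G\<^esub> \<omega> (i + 1) \<in> sym_gens G S \<and>
      (\<zeta> i, \<zeta> (i + 1), inv\<^bsub>G\<^esub> \<omega> i \<otimes>\<^bsub>G\<^esub> \<omega> (i + 1)) \<in> B"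
    if "i \<in> I" "i + 1 \<in> I" for i
    using pairs that unfolding snake_on_def by (metis insertCI)
  ultimately show "snake_on G S A B I \<omega> \<zeta>"
    unfolding snake_on_def by simp
next
  assume snake: "snake_on G S A B I \<omega> \<zeta>"
  show "\<forall>i\<in>I. \<forall>j\<in>I. snake_on G S A B {i, j} \<omega> \<zeta>"
    by (intro ballI snake_on_subset[OF snake]) simp
qed

lemma snake_on_shift:
  assumes "snake_on G S A B I \<omega> \<zeta>"
  shows "snake_on G S A B {i. i + c \<in> I} (\<lambda>i. \<omega> (i + c)) (\<lambda>i. \<zeta> (i + c))"
  using assms unfolding snake_on_def inj_on_def by (auto simp: algebra_simps) (metis add_right_cancel)

lemma snake_on_left_translate:
  assumes "group G" and "g \<in> carrier G" and "snake_on G S A B I \<omega> \<zeta>"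
  shows "snake_on G S A B I (\<lambda>i. g \<otimes>\<^bsub>G\<^esub> \<omega> i) \<zeta>"
proof -
  interpret group G by fact
  have "inv\<^bsub>G\<^esub> (g \<otimes>\<^bsub>G\<^esub> x) \<otimes>\<^bsub>G\<^esub> (g \<otimes>\<^bsub>G\<^esub> y) = inv\<^bsub>G\<^esub> x \<otimes>\<^bsub>G\<^esub> y" if "x \<in> carrier G" "y \<in> carrier G" for x y
    using that \<open>g \<in> carrier G\<close> by (simp add: inv_mult_group m_assoc[symmetric]) (simp add: m_assoc)
  then show ?thesis
    using assms(2,3) unfolding snake_on_def inj_on_def by (auto simp: image_subset_iff)
qed

fun word_ball :: "('g, 'b) monoid_scheme \<Rightarrow> 'g set \<Rightarrow> nat \<Rightarrow> 'g set" where
  "word_ball G S 0 = {\<one>\<^bsub>G\<^esub>}"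
| "word_ball G S (Suc k) =
     word_ball G S k \<union> (\<lambda>(x, s). x \<otimes>\<^bsub>G\<^esub> s) ` (word_ball G S k \<times> sym_gens G S)"

lemma finite_word_ball: "finite S \<Longrightarrow> finite (word_ball G S k)"
  by (induction k) (auto simp: sym_gens_def)

lemma word_ball_mono: "m \<le> n \<Longrightarrow> word_ball G S m \<subseteq> word_ball G S n"
  by (induction n rule: dec_induct) auto

lemma inv_sym_gens:
  assumes "group G" and "S \<subseteq> carrier G" and "s \<in> sym_gens G S"
  shows "inv\<^bsub>G\<^esub> s \<in> sym_gens G S"
proof -
  interpret group G by fact
  show ?thesis using assms(2,3) by (auto simp: sym_gens_def subset_iff)
qed

lemma snake_on_neighbour_in_word_ball:
  fixes G (structure)
  assumes G: "group G" and S: "S \<subseteq> carrier G" and snake: "snake_on G S A B I \<omega> \<zeta>"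
    and "i \<in> I" "j \<in> I" "\<bar>i - j\<bar> = 1" and \<omega>_i: "\<omega> i \<in> word_ball G S k"
  shows "\<omega> j \<in> word_ball G S (Suc k)"
proof -
  interpret group G by fact
  have carrier: "\<omega> i \<in> carrier G" "\<omega> j \<in> carrier G"
    using snake \<open>i \<in> I\<close> \<open>j \<in> I\<close> unfolding snake_on_def by auto
  have "inv \<omega> i \<otimes> \<omega> j \<in> sym_gens G S"
  proof (cases "j = i + 1")
    case True
    then show ?thesis using snake \<open>i \<in> I\<close> \<open>j \<in> I\<close> unfolding snake_on_def by blast
  next
    case False
    then have "i = j + 1" using \<open>\<bar>i - j\<bar> = 1\<close> by auto
    then have "inv \<omega> j \<otimes> \<omega> i \<in> sym_gens G S"
      using snake \<open>i \<in> I\<close> \<open>j \<in> I\<close> unfolding snake_on_def by blast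
    from inv_sym_gens[OF G S this] show ?thesis
      using carrier by (simp add: inv_mult_group)
  qed
  moreover have "\<omega> j = \<omega> i \<otimes> (inv \<omega> i \<otimes> \<omega> j)"
    using carrier by (simp add: m_assoc[symmetric])
  ultimately show ?thesis using \<omega>_i by force
qed

definition window :: "nat \<Rightarrow> int set" where
  "window k = {- int k .. int k}"

lemma rooted_snake_in_word_ball:
  assumes G: "group G" and S: "S \<subseteq> carrier G"
    and snake: "snake_on G S A B (window N) \<omega> \<zeta>" and root: "\<omega> 0 = \<one>\<^bsub>G\<^esub>"
    and "i \<in> window N"
  shows "\<omega> i \<in> word_ball G S (nat \<bar>i\<bar>)"
  using \<open>i \<in> window N\<close>
proof (induction "nat \<bar>i\<bar>" arbitrary: i)
  case 0
  then show ?case using root by simp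
next
  case (Suc k)
  define j where "j = i - sgn i"
  have "j \<in> window N" "nat \<bar>j\<bar> = k" "\<bar>j - i\<bar> = 1"
    using Suc.prems Suc.hyps(2) by (auto simp: j_def window_def sgn_if)
  with Suc.hyps(1) have "\<omega> i \<in> word_ball G S (Suc k)"
    by (intro snake_on_neighbour_in_word_ball[OF G S snake, of j]) (use Suc.prems in auto)
  then show ?case using Suc.hyps(2) by simp
qed

(* A snake is encoded as one function int => 'g \<times> 'a so that koenig_compactness applies. *)
definition rooted_snake ::
  "('g, 'b) monoid_scheme \<Rightarrow> 'g set \<Rightarrow> 'a set \<Rightarrow> ('a \<times> 'a \<times> 'g) set \<Rightarrow>
   nat \<Rightarrow> (int \<Rightarrow> 'g \<times> 'a) \<Rightarrow> bool" where
  "rooted_snake G S A B N f \<longleftrightarrow>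
     snake_on G S A B (window N) (fst \<circ> f) (snd \<circ> f) \<and> fst (f 0) = \<one>\<^bsub>G\<^esub>"

lemma rooted_snake_if_long_snake:
  assumes G: "group G" and snake: "snake_on G S A B {n..m} \<omega> \<zeta>" and long: "n + 2 * int N \<le> m"
  shows "\<exists>f. rooted_snake G S A B N f"
proof -
  define c where "c = n + int N"
  have "c \<in> {n..m}" using long by (simp add: c_def)
  then have "\<omega> c \<in> carrier G"
    using snake unfolding snake_on_def by blast
  then have "inv\<^bsub>G\<^esub> \<omega> c \<in> carrier G"
    by (rule group.inv_closed[OF G])
  moreover have "snake_on G S A B {i. i + c \<in> {n..m}} (\<lambda>i. \<omega> (i + c)) (\<lambda>i. \<zeta> (i + c))"
    using snake by (rule snake_on_shift)
  ultimately have "snake_on G S A B {i. i + c \<in> {n..m}}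
      (\<lambda>i. inv\<^bsub>G\<^esub> \<omega> c \<otimes>\<^bsub>G\<^esub> \<omega> (i + c)) (\<lambda>i. \<zeta> (i + c))"
    using G by (intro snake_on_left_translate)
  moreover have "window N \<subseteq> {i. i + c \<in> {n..m}}"
    using long by (auto simp: window_def c_def)
  ultimately have "snake_on G S A B (window N)
      (\<lambda>i. inv\<^bsub>G\<^esub> \<omega> c \<otimes>\<^bsub>G\<^esub> \<omega> (i + c)) (\<lambda>i. \<zeta> (i + c))"
    by (rule snake_on_subset)
  moreover have "inv\<^bsub>G\<^esub> \<omega> c \<otimes>\<^bsub>G\<^esub> \<omega> c = \<one>\<^bsub>G\<^esub>"
    using \<open>\<omega> c \<in> carrier G\<close> by (rule group.l_inv[OF G])
  ultimately have "rooted_snake G S A B N (\<lambda>i. (inv\<^bsub>G\<^esub> \<omega> c \<otimes>\<^bsub>G\<^esub> \<omega> (i + c), \<zeta> (i + c)))"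
    by (simp add: rooted_snake_def comp_def)
  then show ?thesis by blast
qed

lemma finite_rooted_snakes_on_window:
  assumes "group G" and "finite S" and "S \<subseteq> carrier G" and "finite A"
  shows "finite ((\<lambda>f. restrict f (window k)) ` {f. rooted_snake G S A B k f})"
proof (rule finite_subset)
  show "(\<lambda>f. restrict f (window k)) ` {f. rooted_snake G S A B k f}
      \<subseteq> (window k \<rightarrow>\<^sub>E word_ball G S k \<times> A)"
  proof (clarsimp simp: restrict_PiE_iff)
    fix f i assume rooted: "rooted_snake G S A B k f" and i: "i \<in> window k"
    have snake: "snake_on G S A B (window k) (fst \<circ> f) (snd \<circ> f)"
      and root: "(fst \<circ> f) 0 = \<one>\<^bsub>G\<^esub>"
      using rooted by (simp_all add: rooted_snake_def)
    from rooted_snake_in_word_ball[OF assms(1,3) snake root i]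
    have "fst (f i) \<in> word_ball G S (nat \<bar>i\<bar>)" by simp
    moreover have "nat \<bar>i\<bar> \<le> k" using i by (auto simp: window_def)
    moreover have "snd (f i) \<in> A"
      using rooted i unfolding rooted_snake_def snake_on_def by auto
    ultimately show "f i \<in> word_ball G S k \<times> A"
      using word_ball_mono by (metis mem_Times_iff subsetD)
  qed
  show "finite (window k \<rightarrow>\<^sub>E word_ball G S k \<times> A)"
    using assms by (simp add: finite_PiE window_def finite_word_ball)
qed

lemma snake_on_UNIV_if_windows:
  assumes "\<And>N. snake_on G S A B (window N) \<omega> \<zeta>"
  shows "snake_on G S A B UNIV \<omega> \<zeta>"
proof (subst snake_on_iff_pairs, intro ballI)
  fix i j :: int
  have "{i, j} \<subseteq> window (nat (max \<bar>i\<bar> \<bar>j\<bar>))" by (auto simp: window_def)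
  with assms show "snake_on G S A B {i, j} \<omega> \<zeta>" by (rule snake_on_subset)
qed

lemma has_biinfinite_snake_if_snakes_of_every_length:
  assumes "group G" and "finite S" and "S \<subseteq> carrier G" and "finite A"
    and "has_snakes_of_every_length G S A B"
  shows "has_biinfinite_snake G S A B"
proof -
  have "\<exists>f. rooted_snake G S A B N f" for N
  proof -
    obtain n m \<omega> \<zeta> where "2 * N + 1 \<le> card {n..m}" and snake: "snake_on G S A B {n..m} \<omega> \<zeta>"
      using assms(5) unfolding has_snakes_of_every_length_def by blast
    then have "n + 2 * int N \<le> m" by simp
    with assms(1) snake show ?thesis by (rule rooted_snake_if_long_snake)
  qed
  then have "\<exists>f. \<forall>N. rooted_snake G S A B N f"
  proof (rule koenig_compactness[rotated -1])
    show "mono window"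
      by (auto simp: mono_def window_def)
    show "\<exists>k. i \<in> window k" for i
      by (auto simp: window_def intro!: exI[of _ "nat \<bar>i\<bar>"])
    show "rooted_snake G S A B N f" if "rooted_snake G S A B N' f" "N \<le> N'" for N N' f
    proof -
      have "window N \<subseteq> window N'" using \<open>N \<le> N'\<close> by (auto simp: window_def)
      then show ?thesis using that(1) unfolding rooted_snake_def by (blast intro: snake_on_subset)
    qed
    show "rooted_snake G S A B N f'"
      if "rooted_snake G S A B N f" "restrict f' (window N) = restrict f (window N)" for N f f'
    proof -
      have agree: "f' i = f i" if "i \<in> window N" for i
        using that \<open>restrict f' (window N) = restrict f (window N)\<close> by (metis restrict_apply')
      have "snake_on G S A B (window N) (fst \<circ> f') (snd \<circ> f') \<longleftrightarrow>
          snake_on G S A B (window N) (fst \<circ> f) (snd \<circ> f)"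
        by (rule snake_on_cong) (simp_all add: agree)
      moreover have "f' 0 = f 0" by (rule agree) (simp add: window_def)
      ultimately show ?thesis using \<open>rooted_snake G S A B N f\<close> by (simp add: rooted_snake_def)
    qed
    show "finite ((\<lambda>f. restrict f (window k)) ` {f. rooted_snake G S A B k f})" for k
      using assms(1-4) by (rule finite_rooted_snakes_on_window)
  qed
  then obtain f where "\<And>N. rooted_snake G S A B N f" by blast
  then have "snake_on G S A B UNIV (fst \<circ> f) (snd \<circ> f)"
    unfolding rooted_snake_def by (blast intro: snake_on_UNIV_if_windows)
  then show ?thesis unfolding has_biinfinite_snake_def by blast
qed

lemma has_oneway_snake_if_biinfinite:
  "has_biinfinite_snake G S A B \<Longrightarrow> has_oneway_snake G S A B"
  unfolding has_biinfinite_snake_def has_oneway_snake_def by (meson snake_on_subset subset_UNIV)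

lemma has_snakes_of_every_length_if_oneway:
  assumes "has_oneway_snake G S A B"
  shows "has_snakes_of_every_length G S A B"
  unfolding has_snakes_of_every_length_def
proof
  fix k :: nat
  obtain \<omega> \<zeta> where "snake_on G S A B {0..} \<omega> \<zeta>"
    using assms unfolding has_oneway_snake_def by blast
  then have "snake_on G S A B {0..int k} \<omega> \<zeta>"
    by (rule snake_on_subset) auto
  moreover have "k \<le> card {0..int k}" by simp
  ultimately show "\<exists>n m \<omega> \<zeta>. k \<le> card {n..m} \<and> snake_on G S A B {n..m} \<omega> \<zeta>"
    by blast
qed

theorem proposition1:
  fixes G :: "('g, 'b) monoid_scheme" and S :: "'g set"
    and A :: "'a set" and B :: "('a \<times> 'a \<times> 'g) set"
  assumes "group G" and "finite S" and "S \<subseteq> carrier G"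
    and "generate G S = carrier G"
    and "tileset_graph G S A B"
  shows "(has_biinfinite_snake G S A B \<longleftrightarrow> has_oneway_snake G S A B) \<and>
         (has_oneway_snake G S A B \<longleftrightarrow> has_snakes_of_every_length G S A B)"
proof -
  have "finite A" using assms(5) by (simp add: tileset_graph_def)
  with assms(1-3) have "has_snakes_of_every_length G S A B \<Longrightarrow> has_biinfinite_snake G S A B"
    by (rule has_biinfinite_snake_if_snakes_of_every_length)
  then show ?thesis
    using has_oneway_snake_if_biinfinite has_snakes_of_every_length_if_oneway by blast
qed

end
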